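(* Let $(\Gamma,\rho)$ be a voltage graph with $\Gamma=(V,E)$ rooted and voltage group $G$ a finite group, with local groups $\{G_i\}$ and directed local groups $\{G_i^*\}$, and let $\overline\Gamma$ be its derived graph. Then every (weakly) connected component of $\overline\Gamma$ is rooted if and only if $G_i^*=G_i$ for some root $v_i$ of $\Gamma$; moreover, $G_i^*=G_i$ holds for some root of $\Gamma$ if and only if it holds for every root of $\Gamma$.
   Context: $\Gamma$ is a simple digraph, $e_{ij}$ the edge $v_i\to v_j$; $\rho:E\to G$. A semi-walk is $w=v_{i_1}a_1\dots a_{n-1}v_{i_n}$ with each $a_j\in\{e_{i_ji_{j+1}},e_{i_{j+1}i_j}\}$; closed if $v_{i_1}=v_{i_n}$; a walk if every $a_j=e_{i_ji_{j+1}}$; a path is a walk with distinct vertices. Net voltage $f(w)=\bar\rho(a_1)\cdots\bar\rho(a_{n-1})$, $\bar\rho(a_j)=\rho(a_j)$ for forward edges and $\rho(a_j)^{-1}$ for backward ones ($f=\mathbf 1$ on a single vertex). Local group $G_i=\{f(w): w$ closed semi-walk at $v_i\}$, directed local group $G_i^*=\{f(w): w$ closed walk at $v_i\}$. A digraph is rooted if some vertex (a root) is reachable by a path from every vertex. The derived graph $\overline\Gamma$ has vertex set $G\times V$ (vertices written $[g,v_i]$) and an edge $[g_i,v_i]\to[g_j,v_j]$ iff $e_{ij}\in E$ and $g_j=g_i\cdot\rho(e_{ij})$. Connected components of $\overline\Gamma$ are its maximal weakly connected subgraphs (any two vertices joined by a semi-walk). *)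

theory Defs
  imports "HOL-Algebra.Group"
begin

text \<open>A semi-walk starting at x is encoded by
  its start vertex and a list of steps (z, b): the next vertex z and a flag b,
  where b = True means the forward edge (x, z) is used and b = False means the
  backward edge (z, x) is used.\<close>

inductive semiwalk :: "'v set \<Rightarrow> ('v \<times> 'v) set \<Rightarrow> 'v \<Rightarrow> ('v \<times> bool) list \<Rightarrow> 'v \<Rightarrow> bool"
  for V E where
  sw_nil: "x \<in> V \<Longrightarrow> semiwalk V E x [] x"
| sw_cons: "\<lbrakk>(b \<and> (x, z) \<in> E) \<or> (\<not> b \<and> (z, x) \<in> E); semiwalk V E z s y\<rbrakk>
            \<Longrightarrow> semiwalk V E x ((z, b) # s) y"

definition sw_vertices :: "'v \<Rightarrow> ('v \<times> bool) list \<Rightarrow> 'v list" where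
  "sw_vertices x s = x # map fst s"

definition walk :: "'v set \<Rightarrow> ('v \<times> 'v) set \<Rightarrow> 'v \<Rightarrow> ('v \<times> bool) list \<Rightarrow> 'v \<Rightarrow> bool" where
  "walk V E x s y \<longleftrightarrow> semiwalk V E x s y \<and> (\<forall>st \<in> set s. snd st)"

definition dpath :: "'v set \<Rightarrow> ('v \<times> 'v) set \<Rightarrow> 'v \<Rightarrow> ('v \<times> bool) list \<Rightarrow> 'v \<Rightarrow> bool" where
  "dpath V E x s y \<longleftrightarrow> walk V E x s y \<and> distinct (sw_vertices x s)"

definition is_root :: "'v set \<Rightarrow> ('v \<times> 'v) set \<Rightarrow> 'v \<Rightarrow> bool" where
  "is_root V E r \<longleftrightarrow> r \<in> V \<and> (\<forall>v \<in> V. \<exists>s. dpath V E v s r)"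

definition rooted :: "'v set \<Rightarrow> ('v \<times> 'v) set \<Rightarrow> bool" where
  "rooted V E \<longleftrightarrow> (\<exists>r. is_root V E r)"

fun netv :: "('g, 'm) monoid_scheme \<Rightarrow> ('v \<times> 'v \<Rightarrow> 'g) \<Rightarrow> 'v \<Rightarrow> ('v \<times> bool) list \<Rightarrow> 'g" where
  "netv G \<rho> x [] = \<one>\<^bsub>G\<^esub>"
| "netv G \<rho> x ((z, b) # s) =
     (if b then \<rho> (x, z) else inv\<^bsub>G\<^esub> (\<rho> (z, x))) \<otimes>\<^bsub>G\<^esub> netv G \<rho> z s"

definition local_group ::
  "('g, 'm) monoid_scheme \<Rightarrow> 'v set \<Rightarrow> ('v \<times> 'v) set \<Rightarrow> ('v \<times> 'v \<Rightarrow> 'g) \<Rightarrow> 'v \<Rightarrow> 'g set" where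
  "local_group G V E \<rho> v = {netv G \<rho> v s | s. semiwalk V E v s v}"

definition dir_local_group ::
  "('g, 'm) monoid_scheme \<Rightarrow> 'v set \<Rightarrow> ('v \<times> 'v) set \<Rightarrow> ('v \<times> 'v \<Rightarrow> 'g) \<Rightarrow> 'v \<Rightarrow> 'g set" where
  "dir_local_group G V E \<rho> v = {netv G \<rho> v s | s. walk V E v s v}"

text \<open>Derived graph: vertices [g, v] encoded as pairs (g, v).\<close>
definition derived_V :: "('g, 'm) monoid_scheme \<Rightarrow> 'v set \<Rightarrow> ('g \<times> 'v) set" where
  "derived_V G V = carrier G \<times> V"

definition derived_E ::
  "('g, 'm) monoid_scheme \<Rightarrow> 'v set \<Rightarrow> ('v \<times> 'v) set \<Rightarrow> ('v \<times> 'v \<Rightarrow> 'g)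
     \<Rightarrow> (('g \<times> 'v) \<times> ('g \<times> 'v)) set" where
  "derived_E G V E \<rho> = {((g, u), (h, v)). g \<in> carrier G \<and> (u, v) \<in> E \<and> h = g \<otimes>\<^bsub>G\<^esub> \<rho> (u, v)}"

text \<open>Vertex sets of the (weakly) connected components: maximal sets of vertices
  pairwise joined by semi-walks; the component is the induced subgraph.\<close>
definition components :: "'v set \<Rightarrow> ('v \<times> 'v) set \<Rightarrow> 'v set set" where
  "components V E = {{y. \<exists>s. semiwalk V E x s y} | x. x \<in> V}"

end

theory Submission
  imports Defs
begin

(*
  A semi-walk s of the base graph from x to y lifts, from any start [g, x], to a semi-walk
  of the derived graph ending in [g f(s), y], and every semi-walk of the derived graph is
  such a lift; walks correspond to walks.  So the component of [g, x] consists of the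
  vertices [g f(s), y], two of its vertices [c, r] and [d, r] over the same vertex satisfy
  c^-1 d \<in> G_r, and a closed walk at r of voltage k lifts to a walk from [c, r] to [c k, r].

  If G_r^* = G_r for a root r, every vertex of a component first reaches some [c, r] by a
  lifted path to r, and then the fixed vertex [g f(P), r] by a lifted closed walk of
  voltage c^-1 g f(P).  Conversely, let [a, u] be a root of the component of [1, r] and P a
  path from u to r.  Projecting the walks from the vertices [c, r], c \<in> G_r, to [a, u]
  and appending P gives c^-1 m \<in> G_r^* for m = a f(P); as m \<in> G_r, these elements
  exhaust G_r.
*)

lemma semiwalk_Nil_iff [simp]: "semiwalk V E x [] y \<longleftrightarrow> x \<in> V \<and> y = x"
  by (auto elim: semiwalk.cases intro: semiwalk.intros)

lemma semiwalk_Cons_iff [simp]: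
  "semiwalk V E x ((z, b) # s) y \<longleftrightarrow>
     ((b \<and> (x, z) \<in> E) \<or> (\<not> b \<and> (z, x) \<in> E)) \<and> semiwalk V E z s y"
  by (auto elim: semiwalk.cases intro: semiwalk.intros)

lemma semiwalk_end_in: "semiwalk V E x s y \<Longrightarrow> y \<in> V"
  by (induction rule: semiwalk.induct) auto

lemma semiwalk_append: "semiwalk V E x s m \<Longrightarrow> semiwalk V E m t y \<Longrightarrow> semiwalk V E x (s @ t) y"
  by (induction rule: semiwalk.induct) (auto intro: semiwalk.intros)

lemma semiwalk_suffix: "semiwalk V E x (s @ (w, b) # t) y \<Longrightarrow> semiwalk V E w t y"
proof (induction s arbitrary: x)
  case (Cons st s)
  then show ?case by (cases st) auto
qed simp

lemma semiwalk_mono: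
  "semiwalk V E x s y \<Longrightarrow> V \<subseteq> V' \<Longrightarrow> E \<subseteq> E' \<Longrightarrow> semiwalk V' E' x s y"
  by (induction rule: semiwalk.induct) (auto intro: semiwalk.intros)

fun rev_sw :: "'v \<Rightarrow> ('v \<times> bool) list \<Rightarrow> ('v \<times> bool) list" where
  "rev_sw x [] = []"
| "rev_sw x ((z, b) # s) = rev_sw z s @ [(x, \<not> b)]"

lemma semiwalk_rev_sw:
  assumes "E \<subseteq> V \<times> V"
  shows "semiwalk V E x s y \<Longrightarrow> semiwalk V E y (rev_sw x s) x"
proof (induction rule: semiwalk.induct)
  case (sw_cons b x z s y)
  have "semiwalk V E z [(x, \<not> b)] x"
    using sw_cons.hyps(1) assms by auto
  with sw_cons.IH show ?case by (auto intro: semiwalk_append)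
qed simp

lemma walk_append: "walk V E x s m \<Longrightarrow> walk V E m t y \<Longrightarrow> walk V E x (s @ t) y"
  unfolding walk_def by (auto intro: semiwalk_append)

lemma dpath_from_visited_vertex:
  assumes "dpath V E z t y" and "x \<in> set (sw_vertices z t)"
  shows "\<exists>t'. dpath V E x t' y"
proof (cases "x = z")
  case False
  with assms(2) obtain c where "(x, c) \<in> set t" by (auto simp: sw_vertices_def)
  then obtain t1 t2 where t: "t = t1 @ (x, c) # t2" by (meson split_list)
  have "semiwalk V E x t2 y"
    using assms(1) semiwalk_suffix[of V E z t1 x c t2 y] unfolding t dpath_def walk_def by blast
  moreover have "distinct (sw_vertices x t2)"
    using assms(1) unfolding t dpath_def sw_vertices_def by simp
  ultimately have "dpath V E x t2 y"
    using assms(1) unfolding t dpath_def walk_def by simp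
  then show ?thesis ..
qed (use assms in blast)

lemma walk_imp_dpath:
  assumes "walk V E x s y"
  shows "\<exists>t. dpath V E x t y"
  using assms unfolding walk_def
proof (induction s arbitrary: x)
  case Nil
  then have "dpath V E x [] y" by (simp add: dpath_def walk_def sw_vertices_def)
  then show ?case ..
next
  case (Cons st s)
  obtain z b where st: "st = (z, b)" by force
  with Cons.prems have xz: "(x, z) \<in> E" and "semiwalk V E z s y" "\<forall>st\<in>set s. snd st" by auto
  with Cons.IH obtain t where t: "dpath V E z t y" by blast
  show ?case
  proof (cases "x \<in> set (sw_vertices z t)")
    case False
    with t xz have "dpath V E x ((z, True) # t) y"
      by (auto simp: dpath_def walk_def sw_vertices_def)
    then show ?thesis ..
  next
    case True
    with t show ?thesis by (rule dpath_from_visited_vertex)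
  qed
qed

definition weak_component :: "'v set \<Rightarrow> ('v \<times> 'v) set \<Rightarrow> 'v \<Rightarrow> 'v set" where
  "weak_component V E x = {y. \<exists>s. semiwalk V E x s y}"

lemma components_eq_image_weak_component: "components V E = weak_component V E ` V"
  unfolding components_def weak_component_def by (simp add: setcompr_eq_image)

lemma weak_component_subset: "weak_component V E x \<subseteq> V"
  unfolding weak_component_def by (auto dest: semiwalk_end_in)

lemma weak_component_extend:
  "y \<in> weak_component V E x \<Longrightarrow> semiwalk V E y s z \<Longrightarrow> z \<in> weak_component V E x"
  unfolding weak_component_def by (auto intro: semiwalk_append)

lemma semiwalk_in_weak_component:
  assumes "E \<subseteq> V \<times> V" and "C = weak_component V E x"
  shows "y \<in> C \<Longrightarrow> semiwalk V E y s z \<Longrightarrow> semiwalk C (E \<inter> C \<times> C) y s z"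
proof (induction s arbitrary: y)
  case (Cons st s)
  obtain w b where st: "st = (w, b)" by force
  with Cons.prems have edge: "(b \<and> (y, w) \<in> E) \<or> (\<not> b \<and> (w, y) \<in> E)"
    and rest: "semiwalk V E w s z" by auto
  with assms(1) have "semiwalk V E y [(w, b)] w" by auto
  with Cons.prems(1) assms(2) have "w \<in> C" by (blast intro: weak_component_extend)
  with Cons.IH rest have "semiwalk C (E \<inter> C \<times> C) w s z" by blast
  with edge \<open>w \<in> C\<close> Cons.prems(1) show ?case unfolding st by auto
qed simp

lemma is_root_weak_component_iff:
  assumes "E \<subseteq> V \<times> V" and "C = weak_component V E x"
  shows "is_root C (E \<inter> C \<times> C) r \<longleftrightarrow> r \<in> C \<and> (\<forall>w \<in> C. \<exists>t. walk V E w t r)"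
proof -
  have "C \<subseteq> V" using assms(2) weak_component_subset by simp
  have walk_iff: "walk C (E \<inter> C \<times> C) w t r \<longleftrightarrow> walk V E w t r" if "w \<in> C" for w t
  proof -
    have "semiwalk C (E \<inter> C \<times> C) w t r \<Longrightarrow> semiwalk V E w t r"
      using semiwalk_mono[of C "E \<inter> C \<times> C" w t r V E] \<open>C \<subseteq> V\<close> by blast
    moreover have "semiwalk V E w t r \<Longrightarrow> semiwalk C (E \<inter> C \<times> C) w t r"
      by (rule semiwalk_in_weak_component[OF assms that])
    ultimately show ?thesis
      unfolding walk_def by argo
  qed
  show ?thesis
  proof
    assume "is_root C (E \<inter> C \<times> C) r"
    then show "r \<in> C \<and> (\<forall>w \<in> C. \<exists>t. walk V E w t r)"
      unfolding is_root_def dpath_def using walk_iff by blast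
  next
    assume "r \<in> C \<and> (\<forall>w \<in> C. \<exists>t. walk V E w t r)"
    then show "is_root C (E \<inter> C \<times> C) r"
      unfolding is_root_def using walk_iff walk_imp_dpath by meson
  qed
qed

lemma dir_local_group_subset: "dir_local_group G V E \<rho> r \<subseteq> local_group G V E \<rho> r"
  unfolding dir_local_group_def local_group_def walk_def by blast

locale voltage_graph = group G for G :: "('g, 'm) monoid_scheme" (structure) +
  fixes V :: "'v set" and E :: "('v \<times> 'v) set" and \<rho> :: "'v \<times> 'v \<Rightarrow> 'g"
  assumes edges_in_vertices: "E \<subseteq> V \<times> V"
    and voltage_closed: "\<forall>e \<in> E. \<rho> e \<in> carrier G"
begin

abbreviation "DV \<equiv> derived_V G V"
abbreviation "DE \<equiv> derived_E G V E \<rho>"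

lemma netv_closed: "semiwalk V E x s y \<Longrightarrow> netv G \<rho> x s \<in> carrier G"
  by (induction rule: semiwalk.induct) (use voltage_closed in auto)

lemma netv_append:
  "semiwalk V E x s m \<Longrightarrow> semiwalk V E m t y \<Longrightarrow>
     netv G \<rho> x (s @ t) = netv G \<rho> x s \<otimes> netv G \<rho> m t"
proof (induction rule: semiwalk.induct)
  case (sw_nil x)
  then show ?case by (simp add: netv_closed)
next
  case (sw_cons b x z s m)
  then show ?case
    using voltage_closed netv_closed[OF sw_cons.hyps(2)] netv_closed[OF sw_cons.prems]
    by (auto simp: m_assoc)
qed

lemma netv_rev_sw:
  "semiwalk V E x s y \<Longrightarrow> netv G \<rho> y (rev_sw x s) = inv (netv G \<rho> x s)"
proof (induction rule: semiwalk.induct)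
  case (sw_cons b x z s y)
  have backward_step: "semiwalk V E z [(x, \<not> b)] x"
    using sw_cons.hyps(1) edges_in_vertices by auto
  have "netv G \<rho> y (rev_sw x ((z, b) # s)) = inv (netv G \<rho> z s) \<otimes> netv G \<rho> z [(x, \<not> b)]"
    using netv_append[OF semiwalk_rev_sw[OF edges_in_vertices sw_cons.hyps(2)] backward_step] sw_cons.IH
    by simp
  also have "\<dots> = inv (netv G \<rho> x ((z, b) # s))"
    using sw_cons.hyps(1) voltage_closed netv_closed[OF sw_cons.hyps(2)]
    by (auto simp: inv_mult_group)
  finally show ?case .
qed simp

lemma subgroup_local_group:
  assumes "r \<in> V"
  shows "subgroup (local_group G V E \<rho> r) G"
proof (rule subgroupI)
  show "local_group G V E \<rho> r \<subseteq> carrier G"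
    unfolding local_group_def using netv_closed by blast
  have "semiwalk V E r [] r"
    using assms by simp
  then have "netv G \<rho> r [] \<in> local_group G V E \<rho> r"
    unfolding local_group_def by blast
  then show "local_group G V E \<rho> r \<noteq> {}" by blast
next
  fix a assume "a \<in> local_group G V E \<rho> r"
  then obtain s where s: "semiwalk V E r s r" and a: "a = netv G \<rho> r s"
    unfolding local_group_def by blast
  have "semiwalk V E r (rev_sw r s) r"
    using semiwalk_rev_sw[OF edges_in_vertices s] .
  moreover have "inv a = netv G \<rho> r (rev_sw r s)"
    using netv_rev_sw[OF s] a by simp
  ultimately show "inv a \<in> local_group G V E \<rho> r"
    unfolding local_group_def by blast
next
  fix a b assume "a \<in> local_group G V E \<rho> r" "b \<in> local_group G V E \<rho> r"
  then obtain s t where s: "semiwalk V E r s r" "a = netv G \<rho> r s"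
    and t: "semiwalk V E r t r" "b = netv G \<rho> r t"
    unfolding local_group_def by blast
  have "semiwalk V E r (s @ t) r"
    using semiwalk_append[OF s(1) t(1)] .
  moreover have "a \<otimes> b = netv G \<rho> r (s @ t)"
    using netv_append[OF s(1) t(1)] s(2) t(2) by simp
  ultimately show "a \<otimes> b \<in> local_group G V E \<rho> r"
    unfolding local_group_def by blast
qed

lemma derived_edges_in_vertices: "DE \<subseteq> DV \<times> DV"
  using edges_in_vertices voltage_closed by (auto simp: derived_E_def derived_V_def)

lemma derived_step_iff:
  "(b \<and> ((g, x), (g', z)) \<in> DE) \<or> (\<not> b \<and> ((g', z), (g, x)) \<in> DE) \<longleftrightarrow>
     ((b \<and> (x, z) \<in> E) \<or> (\<not> b \<and> (z, x) \<in> E)) \<and> g \<in> carrier G \<and>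
     g' = g \<otimes> (if b then \<rho> (x, z) else inv \<rho> (z, x))"
proof (cases b)
  case False
  have "g' \<in> carrier G \<and> g = g' \<otimes> \<rho> (z, x) \<longleftrightarrow> g \<in> carrier G \<and> g' = g \<otimes> inv \<rho> (z, x)"
    if "\<rho> (z, x) \<in> carrier G"
    using that by (auto simp: m_assoc)
  with False voltage_closed show ?thesis by (auto simp: derived_E_def)
qed (auto simp: derived_E_def)

lemma semiwalk_lift:
  assumes "semiwalk V E x s y" and "g \<in> carrier G"
  shows "\<exists>t. semiwalk DV DE (g, x) t (g \<otimes> netv G \<rho> x s, y) \<and>
             ((\<forall>st \<in> set t. snd st) \<longleftrightarrow> (\<forall>st \<in> set s. snd st))"
  using assms
proof (induction arbitrary: g rule: semiwalk.induct)
  case (sw_nil x)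
  then have "semiwalk DV DE (g, x) [] (g \<otimes> netv G \<rho> x [], x)"
    by (simp add: derived_V_def)
  then show ?case by fastforce
next
  case (sw_cons b x z s y)
  define a where "a = (if b then \<rho> (x, z) else inv \<rho> (z, x))"
  have a: "a \<in> carrier G"
    using sw_cons.hyps(1) voltage_closed by (auto simp: a_def)
  with sw_cons.prems obtain t where t: "semiwalk DV DE (g \<otimes> a, z) t (g \<otimes> a \<otimes> netv G \<rho> z s, y)"
    and dir: "(\<forall>st \<in> set t. snd st) \<longleftrightarrow> (\<forall>st \<in> set s. snd st)"
    using sw_cons.IH[of "g \<otimes> a"] by auto
  have "semiwalk DV DE (g, x) (((g \<otimes> a, z), b) # t) (g \<otimes> a \<otimes> netv G \<rho> z s, y)"
    using derived_step_iff sw_cons.hyps(1) sw_cons.prems t by (simp add: a_def)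
  moreover have "g \<otimes> a \<otimes> netv G \<rho> z s = g \<otimes> netv G \<rho> x ((z, b) # s)"
    using a sw_cons.prems netv_closed[OF sw_cons.hyps(2)] by (simp add: a_def m_assoc)
  ultimately show ?case
    using dir by (intro exI[of _ "((g \<otimes> a, z), b) # t"]) auto
qed

lemma semiwalk_project:
  "semiwalk DV DE (g, x) t (h, y) \<Longrightarrow>
     \<exists>s. semiwalk V E x s y \<and> h = g \<otimes> netv G \<rho> x s \<and>
         ((\<forall>st \<in> set s. snd st) \<longleftrightarrow> (\<forall>st \<in> set t. snd st))"
proof (induction t arbitrary: g x)
  case Nil
  then have "semiwalk V E x [] y \<and> h = g \<otimes> netv G \<rho> x []"
    by (auto simp: derived_V_def)
  then show ?case by fastforce
next
  case (Cons st t)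
  obtain g' z b where st: "st = ((g', z), b)" by (metis prod.exhaust)
  with Cons.prems have step: "((b \<and> (x, z) \<in> E) \<or> (\<not> b \<and> (z, x) \<in> E)) \<and> g \<in> carrier G \<and>
      g' = g \<otimes> (if b then \<rho> (x, z) else inv \<rho> (z, x))"
    and rest: "semiwalk DV DE (g', z) t (h, y)"
    using derived_step_iff by auto
  from Cons.IH[OF rest] obtain s where s: "semiwalk V E z s y" "h = g' \<otimes> netv G \<rho> z s"
    and dir: "(\<forall>st \<in> set s. snd st) \<longleftrightarrow> (\<forall>st \<in> set t. snd st)"
    by blast
  have "semiwalk V E x ((z, b) # s) y"
    using step s(1) by simp
  moreover have "h = g \<otimes> netv G \<rho> x ((z, b) # s)"
    using step s netv_closed[OF s(1)] voltage_closed by (auto simp: m_assoc)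
  ultimately show ?case
    using dir st by (intro exI[of _ "(z, b) # s"]) auto
qed

lemma walk_lift:
  "walk V E x s y \<Longrightarrow> g \<in> carrier G \<Longrightarrow> \<exists>t. walk DV DE (g, x) t (g \<otimes> netv G \<rho> x s, y)"
  unfolding walk_def using semiwalk_lift by blast

lemma walk_project:
  "walk DV DE (g, x) t (h, y) \<Longrightarrow> \<exists>s. walk V E x s y \<and> h = g \<otimes> netv G \<rho> x s"
  unfolding walk_def using semiwalk_project by blast

lemma derived_weak_component:
  assumes "g \<in> carrier G"
  shows "weak_component DV DE (g, x) = {(g \<otimes> netv G \<rho> x s, y) | s y. semiwalk V E x s y}"
proof (intro equalityI subrelI)
  fix h y assume "(h, y) \<in> weak_component DV DE (g, x)"
  then obtain t where "semiwalk DV DE (g, x) t (h, y)"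
    unfolding weak_component_def by blast
  with semiwalk_project show "(h, y) \<in> {(g \<otimes> netv G \<rho> x s, y) | s y. semiwalk V E x s y}"
    by blast
next
  fix h y assume "(h, y) \<in> {(g \<otimes> netv G \<rho> x s, y) | s y. semiwalk V E x s y}"
  with semiwalk_lift[OF _ assms] show "(h, y) \<in> weak_component DV DE (g, x)"
    unfolding weak_component_def by blast
qed

lemma inv_mult_in_local_group_if_same_weak_component:
  assumes "g \<in> carrier G"
    and "(c, r) \<in> weak_component DV DE (g, x)" and "(d, r) \<in> weak_component DV DE (g, x)"
  shows "inv c \<otimes> d \<in> local_group G V E \<rho> r"
proof -
  obtain s1 s2 where s1: "semiwalk V E x s1 r" "c = g \<otimes> netv G \<rho> x s1"
    and s2: "semiwalk V E x s2 r" "d = g \<otimes> netv G \<rho> x s2"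
    using assms by (auto simp: derived_weak_component)
  have rev: "semiwalk V E r (rev_sw x s1) x"
    using semiwalk_rev_sw[OF edges_in_vertices s1(1)] .
  have "inv g \<otimes> (g \<otimes> netv G \<rho> x s2) = netv G \<rho> x s2"
    using assms(1) netv_closed[OF s2(1)] by (simp add: m_assoc[symmetric])
  then have "inv c \<otimes> d = inv (netv G \<rho> x s1) \<otimes> netv G \<rho> x s2"
    using assms(1) netv_closed[OF s1(1)] netv_closed[OF s2(1)] s1(2) s2(2)
    by (simp add: inv_mult_group m_assoc)
  also have "\<dots> = netv G \<rho> r (rev_sw x s1 @ s2)"
    using assms(1) netv_append[OF rev s2(1)] netv_rev_sw[OF s1(1)] netv_closed[OF s1(1)] by simp
  finally show ?thesis
    using semiwalk_append[OF rev s2(1)] unfolding local_group_def by blast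
qed

lemma dir_local_group_eq_if_weak_component_rooted:
  assumes root: "is_root V E r"
    and C: "C = weak_component DV DE (\<one>, r)" and rooted: "rooted C (DE \<inter> C \<times> C)"
  shows "dir_local_group G V E \<rho> r = local_group G V E \<rho> r"
proof -
  interpret local_group: subgroup "local_group G V E \<rho> r" G
    using root subgroup_local_group unfolding is_root_def by blast
  obtain a u where "is_root C (DE \<inter> C \<times> C) (a, u)"
    using rooted unfolding rooted_def by auto
  then have "(a, u) \<in> C" and to_root: "\<forall>w \<in> C. \<exists>t. walk DV DE w t (a, u)"
    using is_root_weak_component_iff[OF derived_edges_in_vertices C] by auto
  then have "(a, u) \<in> DV"
    using C weak_component_subset[of DV DE "(\<one>, r)"] by blast
  then have a: "a \<in> carrier G" and "u \<in> V"
    by (auto simp: derived_V_def)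
  then obtain P where P: "walk V E u P r"
    using root unfolding is_root_def dpath_def by blast
  define m where "m = a \<otimes> netv G \<rho> u P"
  have dir: "inv c \<otimes> m \<in> dir_local_group G V E \<rho> r" if c: "c \<in> local_group G V E \<rho> r" for c
  proof -
    from c obtain s where s: "semiwalk V E r s r" "c = netv G \<rho> r s"
      unfolding local_group_def by blast
    then have "(\<one> \<otimes> c, r) \<in> C"
      using C by (auto simp: derived_weak_component)
    then have "(c, r) \<in> C"
      using s netv_closed by simp
    with to_root obtain t where "walk DV DE (c, r) t (a, u)" by blast
    then obtain S where S: "walk V E r S u" and a_eq: "a = c \<otimes> netv G \<rho> r S"
      using walk_project by blast
    have "netv G \<rho> r (S @ P) = netv G \<rho> r S \<otimes> netv G \<rho> u P"
      using S P netv_append unfolding walk_def by blast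
    also have "\<dots> = inv c \<otimes> m"
      using c S P a_eq netv_closed unfolding m_def walk_def by (auto simp: m_assoc[symmetric])
    finally show ?thesis
      using walk_append[OF S P] unfolding dir_local_group_def
      by (metis (mono_tags, lifting) mem_Collect_eq)
  qed
  have "m \<in> carrier G"
    using a P netv_closed unfolding m_def walk_def by blast
  then have "m \<in> dir_local_group G V E \<rho> r"
    using dir[OF local_group.one_closed] by simp
  then have "m \<in> local_group G V E \<rho> r"
    by (rule subsetD[OF dir_local_group_subset])
  \<comment> \<open>as \<open>m\<close> lies in the group \<open>G\<^sub>r\<close>, \<open>c \<mapsto> inv c \<otimes> m\<close> maps \<open>G\<^sub>r\<close> onto itself\<close>
  have "k \<in> dir_local_group G V E \<rho> r" if k: "k \<in> local_group G V E \<rho> r" for k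
  proof -
    have "inv (m \<otimes> inv k) \<otimes> m = k"
      using k \<open>m \<in> local_group G V E \<rho> r\<close> by (simp add: inv_mult_group m_assoc)
    with dir[of "m \<otimes> inv k"] k \<open>m \<in> local_group G V E \<rho> r\<close> show ?thesis by auto
  qed
  then show ?thesis
    by (intro equalityI dir_local_group_subset subsetI)
qed

lemma weak_component_rooted_if_dir_local_group_eq:
  assumes root: "is_root V E r"
    and eq: "dir_local_group G V E \<rho> r = local_group G V E \<rho> r"
    and g: "g \<in> carrier G" and x: "x \<in> V" and C: "C = weak_component DV DE (g, x)"
  shows "rooted C (DE \<inter> C \<times> C)"
proof -
  obtain P where P: "walk V E x P r"
    using root x unfolding is_root_def dpath_def by blast
  define R where "R = g \<otimes> netv G \<rho> x P"
  have R: "(R, r) \<in> C"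
    using C P g unfolding R_def walk_def by (auto simp: derived_weak_component)
  have "\<exists>t. walk DV DE (h, v) t (R, r)" if w: "(h, v) \<in> C" for h v
  proof -
    have "(h, v) \<in> DV"
      using w C weak_component_subset[of DV DE "(g, x)"] by blast
    then have h: "h \<in> carrier G" and "v \<in> V"
      by (auto simp: derived_V_def)
    then obtain Q where "walk V E v Q r"
      using root unfolding is_root_def dpath_def by blast
    with h obtain t1 c where t1: "walk DV DE (h, v) t1 (c, r)" and c: "c \<in> carrier G"
      using walk_lift netv_closed unfolding walk_def by blast
    then have "(c, r) \<in> C"
      using w C weak_component_extend[of "(h, v)" DV DE "(g, x)" t1 "(c, r)"]
      unfolding walk_def by blast
    then have "inv c \<otimes> R \<in> dir_local_group G V E \<rho> r"
      using inv_mult_in_local_group_if_same_weak_component[OF g _ R[unfolded C]] C eq by simp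
    then obtain K where K: "walk V E r K r" "inv c \<otimes> R = netv G \<rho> r K"
      unfolding dir_local_group_def by auto
    obtain t2 where "walk DV DE (c, r) t2 (c \<otimes> (inv c \<otimes> R), r)"
      using walk_lift[OF K(1) c] K(2) by auto
    moreover have "c \<otimes> (inv c \<otimes> R) = R"
      using c g P netv_closed unfolding R_def walk_def by (auto simp: m_assoc[symmetric])
    ultimately show ?thesis
      using t1 walk_append by metis
  qed
  with R show ?thesis
    unfolding rooted_def is_root_weak_component_iff[OF derived_edges_in_vertices C]
    by (metis surj_pair)
qed

end

theorem theorem3:
  fixes G :: "('g, 'm) monoid_scheme"
    and V :: "'v set" and E :: "('v \<times> 'v) set" and \<rho> :: "'v \<times> 'v \<Rightarrow> 'g"
  assumes "group G" and "finite (carrier G)"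
    and "finite V" and "E \<subseteq> V \<times> V" and "\<forall>v. (v, v) \<notin> E"
    and "\<forall>e \<in> E. \<rho> e \<in> carrier G"
    and "rooted V E"
  shows "((\<forall>C \<in> components (derived_V G V) (derived_E G V E \<rho>).
             rooted C (derived_E G V E \<rho> \<inter> (C \<times> C)))
          \<longleftrightarrow> (\<exists>r. is_root V E r \<and> dir_local_group G V E \<rho> r = local_group G V E \<rho> r))
       \<and> ((\<exists>r. is_root V E r \<and> dir_local_group G V E \<rho> r = local_group G V E \<rho> r)
          \<longleftrightarrow> (\<forall>r. is_root V E r \<longrightarrow> dir_local_group G V E \<rho> r = local_group G V E \<rho> r))"
proof -
  interpret voltage_graph G V E \<rho>
    using assms(1,4,6) by (simp add: voltage_graph_def voltage_graph_axioms_def)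
  have components: "components DV DE = weak_component DV DE ` (carrier G \<times> V)"
    by (simp add: components_eq_image_weak_component derived_V_def)
  have "\<forall>r. is_root V E r \<longrightarrow> dir_local_group G V E \<rho> r = local_group G V E \<rho> r"
    if "\<forall>C \<in> components DV DE. rooted C (DE \<inter> C \<times> C)"
    using that dir_local_group_eq_if_weak_component_rooted unfolding components is_root_def by auto
  moreover have "\<forall>C \<in> components DV DE. rooted C (DE \<inter> C \<times> C)"
    if "\<exists>r. is_root V E r \<and> dir_local_group G V E \<rho> r = local_group G V E \<rho> r"
    using that weak_component_rooted_if_dir_local_group_eq unfolding components by auto
  moreover have "\<exists>r. is_root V E r"
    using assms(7) unfolding rooted_def .
  ultimately show ?thesis by blast
qed

end
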